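(* Let $\bm{G}_t\in\mathbb{R}^{n_1\times n_2}$, $\epsilon_t>0$, $\bm{L}_t=\epsilon_t\bm{I}_{n_1}+\mathrm{diag}(\bm{G}_t\bm{G}_t^T)$, $\bm{R}_t=\epsilon_t\bm{I}_{n_2}+\mathrm{diag}(\bm{G}_t^T\bm{G}_t)$, $\nu_t=\epsilon_t^{1/2}$, $\mu_t=(\epsilon_t+\|\bm{G}_t\|_\vee^2)^{1/2}$. Let $\bm{X}_t,\bm{X}\in\mathbb{R}^{n_1\times n_2}$ be rank-$r$ matrices, $\bm{X}_t=\bm{U}_t\bm{\Sigma}_t\bm{V}_t^T$ a compact SVD, and $\widetilde{\mathcal{P}}_{\mathbb{T}_t}$ the orthogonal projector, with respect to $\langle\cdot,\cdot\rangle_{\mathcal{W}_t}$, onto $\mathbb{T}_t=\{\bm{U}_t\bm{Q}^T+\bm{P}\bm{V}_t^T:\bm{P}\in\mathbb{R}^{n_1\times r},\bm{Q}\in\mathbb{R}^{n_2\times r}\}$. Assume $\mathcal{A}:\mathbb{R}^{n_1\times n_2}\to\mathbb{R}^m$ satisfies the restricted isometry property of order $3r$ with constant $\delta_{3r}$. Then $$\big\|\widetilde{\mathcal{P}}_{\mathbb{T}_t}\mathcal{W}_t^{-1}\mathcal{A}^*\mathcal{A}(\mathcal{I}-\widetilde{\mathcal{P}}_{\mathbb{T}_t})\bm{X}\big\|_{\mathcal{W}_t}\le\frac12\Big((\nu_t^{-1}-\mu_t^{-1})+(\nu_t^{-1}+\mu_t^{-1})\delta_{3r}\Big)\big\|(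\mathcal{I}-\widetilde{\mathcal{P}}_{\mathbb{T}_t})\bm{X}\big\|_{\mathcal{W}_t}.$$
   Context: Restricted isometry property of order $s$: there is $\delta_s\in(0,1)$ with $(1-\delta_s)\|\bm{Z}\|_F^2\le\|\mathcal{A}\bm{Z}\|_2^2\le(1+\delta_s)\|\bm{Z}\|_F^2$ for all $\bm{Z}$ of rank at most $s$. $\mathcal{A}\bm{Y}=(\langle\bm{A}_i,\bm{Y}\rangle)_{i=1}^m$, $\mathcal{A}^*\bm{p}=\sum_ip_i\bm{A}_i$ is its adjoint under the standard inner product $\langle\bm{A},\bm{B}\rangle=\mathrm{trace}(\bm{A}^T\bm{B})$. $\langle\bm{Z},\bm{Y}\rangle_{\mathcal{W}_t}=\langle\bm{L}_t^{1/4}\bm{Z}\bm{R}_t^{1/4},\bm{Y}\rangle$, $\|\cdot\|_{\mathcal{W}_t}$ its norm, and $\mathcal{W}_t^{-1}\bm{Z}=\bm{L}_t^{-1/4}\bm{Z}\bm{R}_t^{-1/4}$. $\mathcal{I}$ is the identity. $\|\bm{Z}\|_\vee=\max\{\max_i\|\bm{Z}(i,:)\|_2,\max_j\|\bm{Z}(:,j)\|_2\}$. *)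

theory Defs
  imports "HOL-Analysis.Analysis"
begin

text \<open>Matrices in R^(n1 x n2) are rendered as real^'n2^'n1 (rows indexed by 'n1).
  The inner product of this type is the Frobenius inner product trace(A^T B),
  and norm is the Frobenius norm.\<close>

definition outer :: "real^'n1 \<Rightarrow> real^'n2 \<Rightarrow> real^'n2^'n1" where
  "outer u v = (\<chi> i j. u$i * v$j)"

definition diag_of_vec :: "real^'n \<Rightarrow> real^'n^'n" where
  "diag_of_vec d = (\<chi> i j. if i = j then d$i else 0)"

definition diag_powr :: "real^'n^'n \<Rightarrow> real \<Rightarrow> real^'n^'n" where
  "diag_powr D p = (\<chi> i j. if i = j then (D$i$i) powr p else 0)"

definition Lmat :: "real \<Rightarrow> real^'n2^'n1 \<Rightarrow> real^'n1^'n1" where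
  "Lmat eps G = eps *\<^sub>R mat 1 + diag_of_vec (\<chi> i. (G ** transpose G)$i$i)"

definition Rmat :: "real \<Rightarrow> real^'n2^'n1 \<Rightarrow> real^'n2^'n2" where
  "Rmat eps G = eps *\<^sub>R mat 1 + diag_of_vec (\<chi> j. (transpose G ** G)$j$j)"

definition winner :: "real \<Rightarrow> real^'n2^'n1 \<Rightarrow> real^'n2^'n1 \<Rightarrow> real^'n2^'n1 \<Rightarrow> real" where
  "winner eps G Z Y =
     inner (diag_powr (Lmat eps G) (1/4) ** Z ** diag_powr (Rmat eps G) (1/4)) Y"

definition wnorm :: "real \<Rightarrow> real^'n2^'n1 \<Rightarrow> real^'n2^'n1 \<Rightarrow> real" where
  "wnorm eps G Z = sqrt (winner eps G Z Z)"

definition Winv :: "real \<Rightarrow> real^'n2^'n1 \<Rightarrow> real^'n2^'n1 \<Rightarrow> real^'n2^'n1" where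
  "Winv eps G Z = diag_powr (Lmat eps G) (-1/4) ** Z ** diag_powr (Rmat eps G) (-1/4)"

definition wproj :: "real \<Rightarrow> real^'n2^'n1 \<Rightarrow> (real^'n2^'n1) set \<Rightarrow> real^'n2^'n1 \<Rightarrow> real^'n2^'n1" where
  "wproj eps G T Z = (THE Y. Y \<in> T \<and> (\<forall>Y'\<in>T. winner eps G (Z - Y) Y' = 0))"

definition vee_norm :: "real^'n2^'n1 \<Rightarrow> real" where
  "vee_norm G = max (Max (range (\<lambda>i. norm (row i G)))) (Max (range (\<lambda>j. norm (column j G))))"

definition tangent_space :: "nat \<Rightarrow> (nat \<Rightarrow> real^'n1) \<Rightarrow> (nat \<Rightarrow> real^'n2) \<Rightarrow> (real^'n2^'n1) set" where
  "tangent_space r U V =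
     {(\<Sum>k<r. outer (U k) (Q k)) + (\<Sum>k<r. outer (P k) (V k)) | P Q. True}"

definition compact_svd :: "real^'n2^'n1 \<Rightarrow> nat \<Rightarrow> (nat \<Rightarrow> real^'n1) \<Rightarrow> (nat \<Rightarrow> real) \<Rightarrow> (nat \<Rightarrow> real^'n2) \<Rightarrow> bool" where
  "compact_svd X r U s V \<longleftrightarrow>
     (\<forall>i<r. \<forall>j<r. inner (U i) (U j) = (if i = j then 1 else 0)) \<and>
     (\<forall>i<r. \<forall>j<r. inner (V i) (V j) = (if i = j then 1 else 0)) \<and>
     (\<forall>i<r. s i > 0) \<and>
     X = (\<Sum>k<r. s k *\<^sub>R outer (U k) (V k))"

definition opA :: "('m \<Rightarrow> real^'n2^'n1) \<Rightarrow> real^'n2^'n1 \<Rightarrow> real^'m" where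
  "opA As Y = (\<chi> i. inner (As i) Y)"

definition opA_adj :: "('m::finite \<Rightarrow> real^'n2^'n1) \<Rightarrow> real^'m \<Rightarrow> real^'n2^'n1" where
  "opA_adj As p = (\<Sum>i\<in>UNIV. p$i *\<^sub>R As i)"

definition RIP :: "('m::finite \<Rightarrow> real^'n2^'n1) \<Rightarrow> nat \<Rightarrow> real \<Rightarrow> bool" where
  "RIP As s \<delta> \<longleftrightarrow> 0 < \<delta> \<and> \<delta> < 1 \<and>
     (\<forall>Z. rank Z \<le> s \<longrightarrow>
        (1 - \<delta>) * (norm Z)\<^sup>2 \<le> (norm (opA As Z))\<^sup>2 \<and>
        (norm (opA As Z))\<^sup>2 \<le> (1 + \<delta>) * (norm Z)\<^sup>2)"

end

theory Submission
  imports Defs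
begin

(* Scaling every entry of a matrix by the square root of the weight
   w_ij = (L_t)_ii^(1/4) (R_t)_jj^(1/4) turns the W_t inner product into the Frobenius one,
   and nu_t <= w_ij <= mu_t. For Z = (I - P)X and Y = P W^(-1) A*A Z one gets
   ||Y||_W^2 = <W^(-1) A*A Z, Y>_W = <A Z, A Y>. Now Z and Y are W-orthogonal, and every
   combination a Z + b Y is X plus a tangent vector, hence of rank at most 3r. Polarizing
   with q Z + p Y and q Z - p Y (p = ||Z||_W, q = ||Y||_W), which have the same W-norm,
   and comparing their Frobenius norms with the W-norm via nu_t, mu_t and with the
   A-norm via the RIP gives <A Z, A Y> <= c ||Z||_W ||Y||_W for the constant c of the
   claim; dividing by ||Y||_W concludes. *)

lemma inner_le_of_restricted_isometry:
  fixes S :: "'a::real_inner \<Rightarrow> 'b::real_inner" and A :: "'a \<Rightarrow> 'c::real_inner"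
  assumes "linear S" "linear A"
    and "0 < \<nu>" "0 < \<mu>" "0 \<le> \<delta>" "\<delta> \<le> 1"
    and S_lower: "\<And>w. \<nu> * (norm w)\<^sup>2 \<le> (norm (S w))\<^sup>2"
    and S_upper: "\<And>w. (norm (S w))\<^sup>2 \<le> \<mu> * (norm w)\<^sup>2"
    and A_lower: "\<And>a b. (1 - \<delta>) * (norm (a *\<^sub>R z + b *\<^sub>R y))\<^sup>2
                          \<le> (norm (A (a *\<^sub>R z + b *\<^sub>R y)))\<^sup>2"
    and A_upper: "\<And>a b. (norm (A (a *\<^sub>R z + b *\<^sub>R y)))\<^sup>2
                          \<le> (1 + \<delta>) * (norm (a *\<^sub>R z + b *\<^sub>R y))\<^sup>2"
    and orth: "inner (S z) (S y) = 0"
  shows "inner (A z) (A y)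
           \<le> 1/2 * ((1/\<nu> - 1/\<mu>) + (1/\<nu> + 1/\<mu>) * \<delta>) * norm (S z) * norm (S y)"
proof -
  define p where "p = norm (S z)"
  define q where "q = norm (S y)"
  have S_comb: "S (a *\<^sub>R z + b *\<^sub>R y) = a *\<^sub>R S z + b *\<^sub>R S y"
    and A_comb: "A (a *\<^sub>R z + b *\<^sub>R y) = a *\<^sub>R A z + b *\<^sub>R A y" for a b
    using \<open>linear S\<close> \<open>linear A\<close> by (simp_all add: linear_add linear_scale)
  have S_eq_0: "w = 0" if "S w = 0" for w
    using S_lower[of w] that \<open>0 < \<nu>\<close> by (auto simp: mult_le_0_iff)
  consider "p = 0 \<or> q = 0" | "0 < p" "0 < q"
    unfolding p_def q_def by fastforce
  then show ?thesis
  proof cases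
    case 1
    then have "z = 0 \<or> y = 0" using S_eq_0 by (auto simp: p_def q_def)
    then show ?thesis using 1 linear_0[OF \<open>linear A\<close>] by (auto simp: p_def q_def)
  next
    case 2
    define K where "K = 2 * (p * q)\<^sup>2"
    have norm_S: "(norm (S (q *\<^sub>R z + b *\<^sub>R y)))\<^sup>2 = K" if "b = p \<or> b = - p" for b
    proof -
      have "orthogonal (q *\<^sub>R S z) (b *\<^sub>R S y)"
        using orth by (simp add: orthogonal_def)
      then show ?thesis
        using that unfolding S_comb by (auto simp: norm_add_Pythagorean K_def p_def q_def power_mult_distrib)
    qed
    have polar: "(norm (A (q *\<^sub>R z + p *\<^sub>R y)))\<^sup>2
        - (norm (A (q *\<^sub>R z + (- p) *\<^sub>R y)))\<^sup>2
        = 4 * p * q * inner (A z) (A y)"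
      unfolding A_comb by (simp add: power2_norm_eq_inner inner_add_left inner_add_right inner_commute algebra_simps)
    have "(norm (A (q *\<^sub>R z + p *\<^sub>R y)))\<^sup>2 \<le> (1 + \<delta>) * (K / \<nu>)"
    proof -
      have "\<nu> * (norm (q *\<^sub>R z + p *\<^sub>R y))\<^sup>2 \<le> K"
        using S_lower norm_S by metis
      then have "(norm (q *\<^sub>R z + p *\<^sub>R y))\<^sup>2 \<le> K / \<nu>"
        using \<open>0 < \<nu>\<close> by (simp add: le_divide_eq mult.commute)
      then show ?thesis
        using A_upper[of q p] \<open>0 \<le> \<delta>\<close>
        by (meson add_nonneg_nonneg mult_left_mono order_trans zero_le_one)
    qed
    moreover have "(1 - \<delta>) * (K / \<mu>) \<le> (norm (A (q *\<^sub>R z + (- p) *\<^sub>R y)))\<^sup>2"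
    proof -
      have "K \<le> \<mu> * (norm (q *\<^sub>R z + (- p) *\<^sub>R y))\<^sup>2"
        using S_upper norm_S by metis
      then have "K / \<mu> \<le> (norm (q *\<^sub>R z + (- p) *\<^sub>R y))\<^sup>2"
        using \<open>0 < \<mu>\<close> by (simp add: divide_le_eq mult.commute)
      then show ?thesis
        using A_lower[of q "- p"] \<open>\<delta> \<le> 1\<close>
        by (meson diff_ge_0_iff_ge mult_left_mono order_trans)
    qed
    ultimately have "4 * p * q * inner (A z) (A y) \<le> (1 + \<delta>) * (K / \<nu>) - (1 - \<delta>) * (K / \<mu>)"
      using polar by linarith
    also have "\<dots> = 4 * p * q * (1/2 * ((1/\<nu> - 1/\<mu>) + (1/\<nu> + 1/\<mu>) * \<delta>) * p * q)"
      using \<open>0 < \<nu>\<close> \<open>0 < \<mu>\<close> by (simp add: K_def field_simps power2_eq_square)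
    finally have "4 * p * q * inner (A z) (A y)
        \<le> 4 * p * q * (1/2 * ((1/\<nu> - 1/\<mu>) + (1/\<nu> + 1/\<mu>) * \<delta>) * p * q)" .
    moreover have "0 < 4 * p * q"
      using 2 by simp
    ultimately show ?thesis
      unfolding p_def q_def by (rule mult_le_cancel_left_pos[THEN iffD1, rotated])
  qed
qed

lemma subspace_range_matrix_vector_mult: "subspace (range (\<lambda>x. (A::real^'n^'m) *v x))"
  by (simp add: linear_subspace_image matrix_vector_mul_linear)

lemma rank_add_le: "rank ((A::real^'n^'m) + B) \<le> rank A + rank B"
proof -
  let ?S = "range (\<lambda>x. A *v x)" and ?T = "range (\<lambda>x. B *v x)"
  have "range (\<lambda>x. (A + B) *v x) \<subseteq> {x + y |x y. x \<in> ?S \<and> y \<in> ?T}"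
    by (auto simp: matrix_vector_mult_add_rdistrib)
  then have "dim (range (\<lambda>x. (A + B) *v x)) \<le> dim {x + y |x y. x \<in> ?S \<and> y \<in> ?T}"
    by (rule dim_subset)
  also have "\<dots> \<le> dim ?S + dim ?T"
    using dim_sums_Int[OF subspace_range_matrix_vector_mult subspace_range_matrix_vector_mult, of A B]
    by linarith
  finally show ?thesis by (simp add: rank_dim_range)
qed

lemma rank_scaleR_le: "rank (c *\<^sub>R (A::real^'n^'m)) \<le> rank A"
proof -
  have "(c *\<^sub>R A) *v x = A *v (c *\<^sub>R x)" for x
    by (simp add: vec_eq_iff matrix_vector_mult_def sum_distrib_left mult_ac)
  then have "range (\<lambda>x. (c *\<^sub>R A) *v x) \<subseteq> range (\<lambda>x. A *v x)"
    by auto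
  then show ?thesis by (simp add: rank_dim_range dim_subset)
qed

lemma outer_mult_vec_sum:
  "(\<Sum>k\<in>K. outer (u k) (v k)) *v x = (\<Sum>k\<in>K. (v k \<bullet> x) *\<^sub>R u k)"
  by (simp add: outer_def matrix_vector_mult_def vec_eq_iff inner_vec_def
      sum_distrib_left sum_distrib_right mult_ac sum.swap[of _ UNIV K])

lemma rank_sum_outer_le:
  assumes "finite K"
  shows "rank (\<Sum>k\<in>K. outer (u k) (v k)) \<le> card K"
proof -
  have "(\<Sum>k\<in>K. (v k \<bullet> x) *\<^sub>R u k) \<in> span (u ` K)" for x
    by (intro span_sum span_scale span_base imageI)
  then have "range (\<lambda>x. (\<Sum>k\<in>K. outer (u k) (v k)) *v x) \<subseteq> span (u ` K)"
    by (auto simp: outer_mult_vec_sum)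
  then have "rank (\<Sum>k\<in>K. outer (u k) (v k)) \<le> dim (span (u ` K))"
    unfolding rank_dim_range by (rule dim_subset)
  also have "\<dots> = dim (u ` K)"
    by (rule dim_span)
  also have "\<dots> \<le> card K"
    using assms by (meson dim_le_card' card_image_le finite_imageI order_trans)
  finally show ?thesis .
qed

lemma outer_add_left: "outer (a + b) v = outer a v + outer b v"
  and outer_add_right: "outer u (a + b) = outer u a + outer u b"
  and outer_scaleR_left: "outer (c *\<^sub>R a) v = c *\<^sub>R outer a v"
  and outer_scaleR_right: "outer u (c *\<^sub>R b) = c *\<^sub>R outer u b"
  by (simp_all add: outer_def vec_eq_iff algebra_simps)

lemma tangent_space_subspace: "subspace (tangent_space r U V)"
proof -
  let ?T = "tangent_space r U V"
  have "0 \<in> ?T"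
    unfolding tangent_space_def
    by (auto intro!: exI[of _ "\<lambda>_. 0"] simp: outer_def vec_eq_iff)
  moreover have "x + y \<in> ?T" if x: "x \<in> ?T" and y: "y \<in> ?T" for x y
  proof -
    obtain P Q where "x = (\<Sum>k<r. outer (U k) (Q k)) + (\<Sum>k<r. outer (P k) (V k))"
      using x unfolding tangent_space_def by blast
    moreover obtain P' Q' where "y = (\<Sum>k<r. outer (U k) (Q' k)) + (\<Sum>k<r. outer (P' k) (V k))"
      using y unfolding tangent_space_def by blast
    ultimately have "x + y = (\<Sum>k<r. outer (U k) (Q k + Q' k)) + (\<Sum>k<r. outer (P k + P' k) (V k))"
      by (simp add: outer_add_left outer_add_right sum.distrib algebra_simps)
    then show ?thesis unfolding tangent_space_def by fastforce
  qed
  moreover have "c *\<^sub>R x \<in> ?T" if x: "x \<in> ?T" for c x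
  proof -
    obtain P Q where "x = (\<Sum>k<r. outer (U k) (Q k)) + (\<Sum>k<r. outer (P k) (V k))"
      using x unfolding tangent_space_def by blast
    then have "c *\<^sub>R x
        = (\<Sum>k<r. outer (U k) (c *\<^sub>R Q k)) + (\<Sum>k<r. outer (c *\<^sub>R P k) (V k))"
      by (simp add: outer_scaleR_left outer_scaleR_right scaleR_add_right scaleR_sum_right)
    then show ?thesis unfolding tangent_space_def by fastforce
  qed
  ultimately show ?thesis by (simp add: subspace_def)
qed

lemma rank_tangent_space_le:
  assumes "M \<in> tangent_space r U V"
  shows "rank M \<le> 2 * r"
proof -
  obtain P Q where M: "M = (\<Sum>k<r. outer (U k) (Q k)) + (\<Sum>k<r. outer (P k) (V k))"
    using assms unfolding tangent_space_def by blast
  have "rank M \<le> rank (\<Sum>k<r. outer (U k) (Q k)) + rank (\<Sum>k<r. outer (P k) (V k))"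
    unfolding M by (rule rank_add_le)
  also have "\<dots> \<le> r + r"
    using rank_sum_outer_le[of "{..<r}"] by (intro add_mono) auto
  finally show ?thesis by simp
qed

definition wweight :: "real \<Rightarrow> real^'n2^'n1 \<Rightarrow> 'n1 \<Rightarrow> 'n2 \<Rightarrow> real" where
  "wweight eps G i j = (Lmat eps G $ i $ i) powr (1/4) * (Rmat eps G $ j $ j) powr (1/4)"

definition wembed :: "real \<Rightarrow> real^'n2^'n1 \<Rightarrow> real^'n2^'n1 \<Rightarrow> real^'n2^'n1" where
  "wembed eps G Z = (\<chi> i j. sqrt (wweight eps G i j) * Z $ i $ j)"

lemma Lmat_diag: "Lmat eps G $ i $ i = eps + (norm (row i G))\<^sup>2"
  by (simp add: Lmat_def diag_of_vec_def mat_def matrix_matrix_mult_def transpose_def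
      power2_norm_eq_inner inner_vec_def row_def)

lemma Rmat_diag: "Rmat eps G $ j $ j = eps + (norm (column j G))\<^sup>2"
  by (simp add: Rmat_def diag_of_vec_def mat_def matrix_matrix_mult_def transpose_def
      power2_norm_eq_inner inner_vec_def column_def)

lemma norm_row_le_vee_norm: "norm (row i G) \<le> vee_norm G"
  unfolding vee_norm_def by (rule max.coboundedI1) (rule Max_ge; auto)

lemma norm_column_le_vee_norm: "norm (column j G) \<le> vee_norm G"
  unfolding vee_norm_def by (rule max.coboundedI2) (rule Max_ge; auto)

lemma powr_quarter_mult_bounds:
  fixes a b e m :: real
  assumes "0 \<le> e" "e \<le> a" "a \<le> m" "e \<le> b" "b \<le> m"
  shows "sqrt e \<le> a powr (1/4) * b powr (1/4)" "a powr (1/4) * b powr (1/4) \<le> sqrt m"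
proof -
  have sqrt_eq: "sqrt x = x powr (1/4) * x powr (1/4)" if "0 \<le> x" for x :: real
    using that by (simp add: powr_half_sqrt[symmetric] powr_add[symmetric])
  show "sqrt e \<le> a powr (1/4) * b powr (1/4)"
    unfolding sqrt_eq[OF assms(1)] using assms by (intro mult_mono powr_mono2) auto
  have "0 \<le> m" using assms by linarith
  then show "a powr (1/4) * b powr (1/4) \<le> sqrt m"
    unfolding sqrt_eq[OF \<open>0 \<le> m\<close>] using assms by (intro mult_mono powr_mono2) auto
qed

lemma wweight_bounds:
  assumes "0 < eps"
  shows "sqrt eps \<le> wweight eps G i j" "wweight eps G i j \<le> sqrt (eps + (vee_norm G)\<^sup>2)"
proof -
  have row: "(norm (row i G))\<^sup>2 \<le> (vee_norm G)\<^sup>2"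
    by (simp add: norm_row_le_vee_norm power_mono)
  have col: "(norm (column j G))\<^sup>2 \<le> (vee_norm G)\<^sup>2"
    by (simp add: norm_column_le_vee_norm power_mono)
  show "sqrt eps \<le> wweight eps G i j"
    unfolding wweight_def Lmat_diag Rmat_diag using assms row col
    by (intro powr_quarter_mult_bounds(1)[where m = "eps + (vee_norm G)\<^sup>2"]) auto
  show "wweight eps G i j \<le> sqrt (eps + (vee_norm G)\<^sup>2)"
    unfolding wweight_def Lmat_diag Rmat_diag using assms row col
    by (intro powr_quarter_mult_bounds(2)[of eps]) auto
qed

lemma wweight_nonneg: "0 \<le> wweight eps G i j"
  by (simp add: wweight_def)

lemma wweight_pos: "0 < eps \<Longrightarrow> 0 < wweight eps G i j"
  by (metis less_le_trans real_sqrt_gt_zero wweight_bounds(1))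

lemma diag_powr_mult_nth:
  "(diag_powr D p ** Z ** diag_powr E q) $ i $ j = D $ i $ i powr p * Z $ i $ j * E $ j $ j powr q"
  by (simp add: diag_powr_def matrix_matrix_mult_def if_distrib if_distribR sum.delta sum.delta'
      cong: if_cong)

lemma winner_eq_sum:
  "winner eps G Z Y = (\<Sum>i\<in>UNIV. \<Sum>j\<in>UNIV. wweight eps G i j * Z $ i $ j * Y $ i $ j)"
  unfolding winner_def inner_vec_def by (simp add: diag_powr_mult_nth wweight_def mult_ac)

lemma Winv_nth: "Winv eps G Z $ i $ j = Z $ i $ j / wweight eps G i j"
proof -
  have "Winv eps G Z $ i $ j = Lmat eps G $ i $ i powr (-(1/4)) * Z $ i $ j * Rmat eps G $ j $ j powr (-(1/4))"
    unfolding Winv_def diag_powr_mult_nth by simp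
  also have "\<dots> = Z $ i $ j / wweight eps G i j"
    unfolding powr_minus wweight_def by (simp add: field_simps)
  finally show ?thesis .
qed

lemma linear_wembed: "linear (wembed eps G)"
  by (rule linearI) (simp_all add: wembed_def vec_eq_iff algebra_simps)

lemma winner_eq_inner_wembed: "winner eps G Z Y = inner (wembed eps G Z) (wembed eps G Y)"
proof -
  have entry: "wweight eps G i j * Z $ i $ j * Y $ i $ j
      = sqrt (wweight eps G i j) * Z $ i $ j * (sqrt (wweight eps G i j) * Y $ i $ j)" for i j
    by (simp add: wweight_def mult_ac flip: real_sqrt_mult)
  show ?thesis
    unfolding winner_eq_sum wembed_def inner_vec_def inner_real_def vec_lambda_beta
    by (intro sum.cong refl) (rule entry)
qed

lemma wnorm_eq_norm_wembed: "wnorm eps G Z = norm (wembed eps G Z)"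
  by (simp add: wnorm_def winner_eq_inner_wembed norm_eq_sqrt_inner)

lemma winner_Winv:
  assumes "0 < eps"
  shows "winner eps G (Winv eps G M) Y = inner M Y"
proof -
  have entry: "wweight eps G i j * (M $ i $ j / wweight eps G i j) * Y $ i $ j = M $ i $ j * Y $ i $ j" for i j
    using wweight_pos[OF assms, of G i j] by simp
  show ?thesis
    unfolding winner_eq_sum Winv_nth inner_vec_def inner_real_def
    by (intro sum.cong refl) (rule entry)
qed

lemma norm_matrix_squared: "(norm (Z::real^'n2^'n1))\<^sup>2 = (\<Sum>i\<in>UNIV. \<Sum>j\<in>UNIV. (Z $ i $ j)\<^sup>2)"
  unfolding power2_norm_eq_inner by (simp add: inner_vec_def power2_eq_square)

lemma norm_wembed_bounds:
  assumes "0 < eps"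
  shows "sqrt eps * (norm Z)\<^sup>2 \<le> (norm (wembed eps G Z))\<^sup>2"
    and "(norm (wembed eps G Z))\<^sup>2 \<le> sqrt (eps + (vee_norm G)\<^sup>2) * (norm Z)\<^sup>2"
proof -
  have "(norm (wembed eps G Z))\<^sup>2 = (\<Sum>i\<in>UNIV. \<Sum>j\<in>UNIV. wweight eps G i j * (Z $ i $ j)\<^sup>2)"
    by (simp add: norm_matrix_squared wembed_def power_mult_distrib wweight_nonneg)
  then show "sqrt eps * (norm Z)\<^sup>2 \<le> (norm (wembed eps G Z))\<^sup>2"
    and "(norm (wembed eps G Z))\<^sup>2 \<le> sqrt (eps + (vee_norm G)\<^sup>2) * (norm Z)\<^sup>2"
    unfolding norm_matrix_squared[of Z] sum_distrib_left
    by (auto intro!: sum_mono mult_right_mono wweight_bounds[OF assms])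
qed

lemma winner_diff_left: "winner eps G (Z - Z') Y = winner eps G Z Y - winner eps G Z' Y"
  by (simp add: winner_eq_inner_wembed linear_diff[OF linear_wembed] inner_diff_left)

lemma wproj_characterization:
  assumes "0 < eps" and "subspace T"
  shows "wproj eps G T Z \<in> T" and "\<And>Y. Y \<in> T \<Longrightarrow> winner eps G (Z - wproj eps G T Z) Y = 0"
proof -
  let ?S = "wembed eps G"
  let ?is_proj = "\<lambda>Y. Y \<in> T \<and> (\<forall>Y'\<in>T. winner eps G (Z - Y) Y' = 0)"
  have "\<exists>Y. ?is_proj Y"
  proof -
    have "subspace (?S ` T)"
      by (rule linear_subspace_image[OF linear_wembed assms(2)])
    then obtain y w where "y \<in> ?S ` T" "\<And>v. v \<in> ?S ` T \<Longrightarrow> orthogonal w v" "?S Z = y + w"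
      using orthogonal_subspace_decomp_exists[of "?S ` T" "?S Z"] by (metis span_eq_iff)
    then obtain t where "t \<in> T" "\<And>Y'. Y' \<in> T \<Longrightarrow> inner (?S Z - ?S t) (?S Y') = 0"
      by (auto simp: orthogonal_def)
    then show ?thesis
      by (auto simp: winner_eq_inner_wembed linear_diff[OF linear_wembed])
  qed
  moreover have "Y1 = Y2" if Y1: "?is_proj Y1" and Y2: "?is_proj Y2" for Y1 Y2
  proof -
    have "Y1 - Y2 \<in> T"
      using Y1 Y2 assms(2) by (simp add: subspace_diff)
    then have "winner eps G (Z - Y2) (Y1 - Y2) - winner eps G (Z - Y1) (Y1 - Y2) = 0"
      using Y1 Y2 by simp
    then have "winner eps G (Y1 - Y2) (Y1 - Y2) = 0"
      by (simp flip: winner_diff_left)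
    then have "wembed eps G (Y1 - Y2) = 0"
      by (simp add: winner_eq_inner_wembed)
    then show ?thesis
      using norm_wembed_bounds(1)[OF assms(1), of "Y1 - Y2" G] assms(1) by (simp add: mult_le_0_iff)
  qed
  ultimately have "\<exists>!Y. ?is_proj Y"
    by blast
  then have "?is_proj (wproj eps G T Z)"
    unfolding wproj_def by (rule theI')
  then show "wproj eps G T Z \<in> T"
    and "\<And>Y. Y \<in> T \<Longrightarrow> winner eps G (Z - wproj eps G T Z) Y = 0"
    by auto
qed

lemma linear_opA: "linear (opA As)"
  by (rule linearI) (simp_all add: opA_def vec_eq_iff inner_add_right)

lemma inner_opA_adj: "inner (opA_adj As p) Y = inner p (opA As Y)"
proof -
  have "inner p (opA As Y) = (\<Sum>i\<in>UNIV. p $ i * inner (As i) Y)"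
    by (simp add: opA_def inner_vec_def)
  then show ?thesis
    by (simp add: opA_adj_def inner_sum_left)
qed

lemma rank_combination_le:
  assumes "rank X = r" and "Y \<in> tangent_space r U V" and "W \<in> tangent_space r U V"
  shows "rank (a *\<^sub>R (X - W) + b *\<^sub>R Y) \<le> 3 * r"
proof -
  have "b *\<^sub>R Y - a *\<^sub>R W \<in> tangent_space r U V"
    using tangent_space_subspace[of r U V] assms(2,3)
    by (simp add: subspace_diff subspace_scale)
  then have "rank (b *\<^sub>R Y - a *\<^sub>R W) \<le> 2 * r"
    by (rule rank_tangent_space_le)
  moreover have "a *\<^sub>R (X - W) + b *\<^sub>R Y = a *\<^sub>R X + (b *\<^sub>R Y - a *\<^sub>R W)"
    by (simp add: algebra_simps)
  then have "rank (a *\<^sub>R (X - W) + b *\<^sub>R Y) \<le> rank (a *\<^sub>R X) + rank (b *\<^sub>R Y - a *\<^sub>R W)"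
    by (simp only: rank_add_le)
  ultimately show ?thesis
    using rank_scaleR_le[of a X] assms(1) by linarith
qed

lemma inner_opA_le_wnorm:
  assumes "0 < eps" and "RIP As k \<delta>" and "winner eps G Z Y = 0"
    and "\<And>a b. rank (a *\<^sub>R Z + b *\<^sub>R Y) \<le> k"
  shows "inner (opA As Z) (opA As Y)
    \<le> 1/2 * ((1/sqrt eps - 1/sqrt (eps + (vee_norm G)\<^sup>2))
              + (1/sqrt eps + 1/sqrt (eps + (vee_norm G)\<^sup>2)) * \<delta>)
        * wnorm eps G Z * wnorm eps G Y"
  unfolding wnorm_eq_norm_wembed
proof (rule inner_le_of_restricted_isometry[OF linear_wembed linear_opA])
  show "0 < sqrt eps" "0 < sqrt (eps + (vee_norm G)\<^sup>2)"
    using assms(1) by (simp_all add: add_pos_nonneg)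
  show "0 \<le> \<delta>" "\<delta> \<le> 1"
    using assms(2) unfolding RIP_def by auto
  show "sqrt eps * (norm W)\<^sup>2 \<le> (norm (wembed eps G W))\<^sup>2"
    and "(norm (wembed eps G W))\<^sup>2 \<le> sqrt (eps + (vee_norm G)\<^sup>2) * (norm W)\<^sup>2" for W
    using norm_wembed_bounds[OF assms(1)] by blast+
  show "inner (wembed eps G Z) (wembed eps G Y) = 0"
    using assms(3) by (simp add: winner_eq_inner_wembed)
  show "(1 - \<delta>) * (norm (a *\<^sub>R Z + b *\<^sub>R Y))\<^sup>2
          \<le> (norm (opA As (a *\<^sub>R Z + b *\<^sub>R Y)))\<^sup>2"
    and "(norm (opA As (a *\<^sub>R Z + b *\<^sub>R Y)))\<^sup>2
          \<le> (1 + \<delta>) * (norm (a *\<^sub>R Z + b *\<^sub>R Y))\<^sup>2"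
    for a b
    using assms(2) assms(4)[of a b] unfolding RIP_def by blast+
qed

lemma wnorm_wproj_Winv_squared:
  fixes G Z :: "real^'n2^'n1" and As :: "'m::finite \<Rightarrow> real^'n2^'n1"
  assumes "0 < eps" and "subspace T"
  defines "Y \<equiv> wproj eps G T (Winv eps G (opA_adj As (opA As Z)))"
  shows "(wnorm eps G Y)\<^sup>2 = inner (opA As Z) (opA As Y)"
proof -
  have "(wnorm eps G Y)\<^sup>2 = winner eps G Y Y"
    by (simp add: wnorm_eq_norm_wembed winner_eq_inner_wembed power2_norm_eq_inner)
  also have "\<dots> = winner eps G (Winv eps G (opA_adj As (opA As Z))) Y"
  proof -
    have "winner eps G (Winv eps G (opA_adj As (opA As Z)) - Y) Y = 0"
      unfolding Y_def using wproj_characterization[OF assms(1,2)] by blast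
    then show ?thesis
      by (simp add: winner_diff_left)
  qed
  also have "\<dots> = inner (opA_adj As (opA As Z)) Y"
    by (rule winner_Winv[OF assms(1)])
  also have "\<dots> = inner (opA As Z) (opA As Y)"
    by (rule inner_opA_adj)
  finally show ?thesis .
qed

lemma le_of_square_le:
  fixes x c :: real
  assumes "x\<^sup>2 \<le> c * x" and "0 \<le> x" and "0 \<le> c"
  shows "x \<le> c"
  using assms by (cases "x = 0") (auto simp: power2_eq_square)

theorem lemma3p9:
  fixes G Xt X :: "real^'n2^'n1"
    and eps \<delta> :: real
    and r :: nat
    and U :: "nat \<Rightarrow> real^'n1" and s :: "nat \<Rightarrow> real" and V :: "nat \<Rightarrow> real^'n2"
    and As :: "'m::finite \<Rightarrow> real^'n2^'n1"
  assumes eps_pos: "eps > 0"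
    and rank_Xt: "rank Xt = r"
    and rank_X: "rank X = r"
    and svd: "compact_svd Xt r U s V"
    and rip: "RIP As (3 * r) \<delta>"
  defines "\<nu> \<equiv> sqrt eps"
    and "\<mu> \<equiv> sqrt (eps + (vee_norm G)\<^sup>2)"
    and "P \<equiv> wproj eps G (tangent_space r U V)"
  shows "wnorm eps G (P (Winv eps G (opA_adj As (opA As (X - P X)))))
           \<le> 1/2 * ((1/\<nu> - 1/\<mu>) + (1/\<nu> + 1/\<mu>) * \<delta>) * wnorm eps G (X - P X)"
proof -
  define Z where "Z = X - P X"
  define Y where "Y = P (Winv eps G (opA_adj As (opA As Z)))"
  define c where "c = 1/2 * ((1/\<nu> - 1/\<mu>) + (1/\<nu> + 1/\<mu>) * \<delta>)"
  note proj = wproj_characterization[OF eps_pos tangent_space_subspace[of r U V], where G = G,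
      folded P_def]
  have orth: "winner eps G Z Y = 0"
    unfolding Z_def Y_def by (rule proj(2)[OF proj(1)])
  have "rank (a *\<^sub>R Z + b *\<^sub>R Y) \<le> 3 * r" for a b
    unfolding Z_def Y_def by (rule rank_combination_le[OF rank_X proj(1) proj(1)])
  then have "inner (opA As Z) (opA As Y) \<le> c * wnorm eps G Z * wnorm eps G Y"
    unfolding c_def \<nu>_def \<mu>_def by (rule inner_opA_le_wnorm[OF eps_pos rip orth])
  moreover have "(wnorm eps G Y)\<^sup>2 = inner (opA As Z) (opA As Y)"
    unfolding Y_def P_def by (rule wnorm_wproj_Winv_squared[OF eps_pos tangent_space_subspace])
  ultimately have "(wnorm eps G Y)\<^sup>2 \<le> (c * wnorm eps G Z) * wnorm eps G Y"
    by simp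
  moreover have "0 \<le> c"
  proof -
    have "0 < \<nu>" "\<nu> \<le> \<mu>" "0 < \<delta>"
      using eps_pos rip by (simp_all add: \<nu>_def \<mu>_def RIP_def)
    then show ?thesis
      by (simp add: c_def frac_le)
  qed
  ultimately have "wnorm eps G Y \<le> c * wnorm eps G Z"
    using le_of_square_le[of "wnorm eps G Y" "c * wnorm eps G Z"] by (simp add: wnorm_eq_norm_wembed)
  then show ?thesis
    by (simp add: Y_def Z_def c_def)
qed

end
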